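(* Let $\mathbb{F}$ be an algebraically closed field of characteristic different from $2$ and let $\mathcal{H}_3(\mathcal{O}(\mathbb{F}))$ be the Jordan algebra of self-adjoint $3\times3$ matrices over the octonion algebra $\mathcal{O}(\mathbb{F})$. Then every 2-local inner derivation on $\mathcal{H}_3(\mathcal{O}(\mathbb{F}))$ is a derivation.
   Context: $\mathcal{Q}(\mathbb{F})$ is a quaternion algebra: associative unital with basis $\mathbf{1},i,j,k$, $i^2=\lambda\mathbf{1}$, $j^2=\mu\mathbf{1}$, $ij=-ji=k$ ($\lambda,\mu\neq0$), involution $a\mapsto\bar a$ negating the $i,j,k$ coordinates. $\mathcal{O}(\mathbb{F})=\mathcal{Q}(\mathbb{F})\oplus\mathcal{Q}(\mathbb{F})$ with product $(a,b)(c,d)=(ac+\nu\bar d b,\ da+b\bar c)$ for a fixed nonzero $\nu\in\mathbb{F}$, and involution $\overline{(a,b)}=(\bar a,-b)$ (the octonion/Cayley algebra; over an algebraically closed field it is the split octonions). $\mathcal{H}_3(\mathcal{O}(\mathbb{F}))$ is the 27-dimensional space of $3\times3$ matrices $x$ over $\mathcal{O}(\mathbb{F})$ with $x_{ij}=\overline{x_{ji}}$, with Jordan product $x\circ y=\frac12(xy+yx)$. A derivation is a linear map $D$ with $D(x\circ y)=D(x)\circ y+x\circ D(y)$; an inner derivation is a map $x\mapsto\sum_{k=1}^m(a_k\circ(b_k\circ x)-b_k\circ(a_k\circ x))$; a 2-local inner derivation is a map $\Delta$ (not assumed linear) such that for all $x,y$ there is an inner derivation $D$ with $\Delta(x)=D(x)$,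 $\Delta(y)=D(y)$. *)

theory Defs
  imports "HOL-Library.Product_Plus" "HOL-Library.Function_Algebras"
          "HOL-Library.Numeral_Type" "HOL-Computational_Algebra.Polynomial"
begin

text \<open>Coordinates (a0,a1,a2,a3) w.r.t. the basis 1,i,j,k, with
  i^2 = lam, j^2 = mu, ij = -ji = k (hence k^2 = -lam mu, ik = lam j, ki = -lam j,
  jk = -mu i, kj = mu i).\<close>

type_synonym 'a quat = "'a \<times> 'a \<times> 'a \<times> 'a"

fun qmul :: "'a::field \<Rightarrow> 'a \<Rightarrow> 'a quat \<Rightarrow> 'a quat \<Rightarrow> 'a quat" where
  "qmul lam mu (a0, a1, a2, a3) (b0, b1, b2, b3) =
    (a0*b0 + lam*a1*b1 + mu*a2*b2 - lam*mu*a3*b3,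
     a0*b1 + a1*b0 - mu*a2*b3 + mu*a3*b2,
     a0*b2 + a2*b0 + lam*a1*b3 - lam*a3*b1,
     a0*b3 + a3*b0 + a1*b2 - a2*b1)"

fun qconj :: "'a::field quat \<Rightarrow> 'a quat" where
  "qconj (a0, a1, a2, a3) = (a0, - a1, - a2, - a3)"

fun qscale :: "'a::field \<Rightarrow> 'a quat \<Rightarrow> 'a quat" where
  "qscale c (a0, a1, a2, a3) = (c*a0, c*a1, c*a2, c*a3)"

type_synonym 'a oct = "'a quat \<times> 'a quat"

fun omul :: "'a::field \<Rightarrow> 'a \<Rightarrow> 'a \<Rightarrow> 'a oct \<Rightarrow> 'a oct \<Rightarrow> 'a oct" where
  "omul lam mu nu (a, b) (c, d) =
    (qmul lam mu a c + qscale nu (qmul lam mu (qconj d) b),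
     qmul lam mu d a + qmul lam mu b (qconj c))"

fun oconj :: "'a::field oct \<Rightarrow> 'a oct" where
  "oconj (a, b) = (qconj a, - b)"

fun oscale :: "'a::field \<Rightarrow> 'a oct \<Rightarrow> 'a oct" where
  "oscale c (a, b) = (qscale c a, qscale c b)"

type_synonym 'a mat3 = "3 \<Rightarrow> 3 \<Rightarrow> 'a oct"

definition H3 :: "'a::field mat3 set" where
  "H3 = {x. \<forall>i j. x i j = oconj (x j i)}"

definition mmul :: "'a::field \<Rightarrow> 'a \<Rightarrow> 'a \<Rightarrow> 'a mat3 \<Rightarrow> 'a mat3 \<Rightarrow> 'a mat3" where
  "mmul lam mu nu x y = (\<lambda>i j. \<Sum>k\<in>UNIV. omul lam mu nu (x i k) (y k j))"

definition mscale :: "'a::field \<Rightarrow> 'a mat3 \<Rightarrow> 'a mat3" where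
  "mscale c x = (\<lambda>i j. oscale c (x i j))"

definition jprod :: "'a::field \<Rightarrow> 'a \<Rightarrow> 'a \<Rightarrow> 'a mat3 \<Rightarrow> 'a mat3 \<Rightarrow> 'a mat3" where
  "jprod lam mu nu x y = mscale (1/2) (mmul lam mu nu x y + mmul lam mu nu y x)"

definition is_derivation :: "'a::field \<Rightarrow> 'a \<Rightarrow> 'a \<Rightarrow> ('a mat3 \<Rightarrow> 'a mat3) \<Rightarrow> bool" where
  "is_derivation lam mu nu D \<longleftrightarrow>
     (\<forall>x\<in>H3. D x \<in> H3) \<and>
     (\<forall>x\<in>H3. \<forall>y\<in>H3. D (x + y) = D x + D y) \<and>
     (\<forall>c. \<forall>x\<in>H3. D (mscale c x) = mscale c (D x)) \<and>
     (\<forall>x\<in>H3. \<forall>y\<in>H3. D (jprod lam mu nu x y) =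
        jprod lam mu nu (D x) y + jprod lam mu nu x (D y))"

definition is_inner_derivation :: "'a::field \<Rightarrow> 'a \<Rightarrow> 'a \<Rightarrow> ('a mat3 \<Rightarrow> 'a mat3) \<Rightarrow> bool" where
  "is_inner_derivation lam mu nu D \<longleftrightarrow>
     (\<exists>(m::nat) (a::nat \<Rightarrow> 'a mat3) (b::nat \<Rightarrow> 'a mat3).
        (\<forall>k<m. a k \<in> H3 \<and> b k \<in> H3) \<and>
        (\<forall>x\<in>H3. D x = (\<Sum>k<m. jprod lam mu nu (a k) (jprod lam mu nu (b k) x)
                               - jprod lam mu nu (b k) (jprod lam mu nu (a k) x))))"

definition is_2local_inner_derivation ::
  "'a::field \<Rightarrow> 'a \<Rightarrow> 'a \<Rightarrow> ('a mat3 \<Rightarrow> 'a mat3) \<Rightarrow> bool" where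
  "is_2local_inner_derivation lam mu nu \<Delta> \<longleftrightarrow>
     (\<forall>x\<in>H3. \<forall>y\<in>H3. \<exists>D. is_inner_derivation lam mu nu D \<and> \<Delta> x = D x \<and> \<Delta> y = D y)"

definition algebraically_closed :: "'a::field itself \<Rightarrow> bool" where
  "algebraically_closed _ \<longleftrightarrow> (\<forall>p::'a poly. degree p > 0 \<longrightarrow> (\<exists>z. poly p z = 0))"

end

theory Submission
  imports Defs
begin

(* In coordinates, H_3(O) carries the trace form T(x, y) = tr (xy + yx), which is
   nondegenerate, and the Freudenthal adjoint x# with its polarization, the cross product x \<times> y.
   An inner derivation D = [L_a, L_b] is T-skew, and T(x#, D x) = 0 because L_x# commutes with L_x;
   polarizing this and using nondegeneracy gives D(x#) = x \<times> D x, hence D(x\<^sup>2) = 2 x \<circ> D x.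
   T-skewness and the Leibniz rule on squares each involve only two points, so a 2-local inner
   derivation inherits both. Skewness alone makes a map linear, by nondegeneracy of T, and
   polarizing the rule on squares gives the Leibniz rule. *)

lemma self_eq_neg_iff:
  fixes a :: "'a::field"
  assumes "2 \<noteq> (0::'a)"
  shows "a = - a \<longleftrightarrow> a = 0"
  using assms by (metis add.inverse_neutral eq_neg_iff_add_eq_0 mult_2 mult_eq_0_iff)

lemma exhaust_3: "(i::3) = 0 \<or> i = 1 \<or> i = 2"
proof (induct i)
  case (of_int z)
  then have "z = 0 \<or> z = 1 \<or> z = 2"
    by fastforce
  then show ?case
    by auto
qed

lemma distinct_3: "(0::3) \<noteq> 1" "(1::3) \<noteq> 0" "(0::3) \<noteq> 2" "(2::3) \<noteq> 0" "(1::3) \<noteq> 2" "(2::3) \<noteq> 1"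
  by simp_all

lemma UNIV_3: "(UNIV :: 3 set) = {0, 1, 2}"
  using exhaust_3 by auto

lemma sum_UNIV_3: "(\<Sum>k\<in>UNIV. f k) = f 0 + f 1 + f (2::3)"
  unfolding UNIV_3 by (simp add: distinct_3 ac_simps)

lemma mat3_eqI:
  fixes x y :: "3 \<Rightarrow> 3 \<Rightarrow> 'c"
  assumes "x 0 0 = y 0 0" "x 0 1 = y 0 1" "x 0 2 = y 0 2"
    and "x 1 0 = y 1 0" "x 1 1 = y 1 1" "x 1 2 = y 1 2"
    and "x 2 0 = y 2 0" "x 2 1 = y 2 1" "x 2 2 = y 2 2"
  shows "x = y"
proof (intro ext)
  fix i j :: 3
  show "x i j = y i j"
    using exhaust_3[of i] exhaust_3[of j] assms by auto
qed

type_synonym 'a coords = "'a \<times> 'a \<times> 'a \<times> 'a oct \<times> 'a oct \<times> 'a oct"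

lemma oct_induct:
  "(\<And>a0 a1 a2 a3 a4 a5 a6 a7. P ((a0, a1, a2, a3), (a4, a5, a6, a7))) \<Longrightarrow> P c"
  by (metis prod.exhaust)

lemma coords_induct:
  "(\<And>d0 d1 d2 a0 a1 a2 a3 a4 a5 a6 a7 b0 b1 b2 b3 b4 b5 b6 b7 c0 c1 c2 c3 c4 c5 c6 c7.
     P (d0, d1, d2, ((a0, a1, a2, a3), (a4, a5, a6, a7)), ((b0, b1, b2, b3), (b4, b5, b6, b7)),
        ((c0, c1, c2, c3), (c4, c5, c6, c7))))
   \<Longrightarrow> P (p :: 'a coords)"
  by (metis prod.exhaust)

definition re :: "'a::field oct \<Rightarrow> 'a" where
  "re u = fst (fst u)"

fun cscale :: "'a::field \<Rightarrow> 'a coords \<Rightarrow> 'a coords" where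
  "cscale c (d0, d1, d2, c0, c1, c2) = (c * d0, c * d1, c * d2, oscale c c0, oscale c c1, oscale c c2)"

fun trace :: "'a::field coords \<Rightarrow> 'a" where
  "trace (d0, d1, d2, c0, c1, c2) = d0 + d1 + d2"

definition cunit :: "'a::field coords" where
  "cunit = (1, 1, 1, 0, 0, 0)"

interpretation coords: vector_space "cscale :: 'a::field \<Rightarrow> 'a coords \<Rightarrow> 'a coords"
  by unfold_locales (simp_all add: split_paired_all algebra_simps)

lemma cscale_two: "cscale 2 p = p + p"
  using coords.scale_left_distrib[of 1 1 p] by simp

definition oscalar :: "'a::field \<Rightarrow> 'a oct" where
  "oscalar d = ((d, 0, 0, 0), (0, 0, 0, 0))"

(* herm (d0, d1, d2, c0, c1, c2) is the matrix
   [[d0, c2, conj c1], [conj c2, d1, c0], [c1, conj c0, d2]]. *)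
fun herm :: "'a::field coords \<Rightarrow> 'a mat3" where
  "herm (d0, d1, d2, c0, c1, c2) = (\<lambda>i j.
     if i = 0 then (if j = 0 then oscalar d0 else if j = 1 then c2 else oconj c1)
     else if i = 1 then (if j = 0 then oconj c2 else if j = 1 then oscalar d1 else c0)
     else (if j = 0 then c1 else if j = 1 then oconj c0 else oscalar d2))"

definition coords_of :: "'a::field mat3 \<Rightarrow> 'a coords" where
  "coords_of x = (re (x 0 0), re (x 1 1), re (x 2 2), x 1 2, x 2 0, x 0 1)"

lemma coords_of_herm: "coords_of (herm p) = p"
  by (induct p rule: coords_induct) (simp add: coords_of_def oscalar_def re_def distinct_3)

lemma herm_in_H3: "herm p \<in> H3"
  unfolding H3_def
proof (intro CollectI allI)
  fix i j :: 3
  show "herm p i j = oconj (herm p j i)"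
    using exhaust_3[of i] exhaust_3[of j]
    by (induct p rule: coords_induct) (auto simp: oscalar_def distinct_3)
qed

lemma herm_coords_of:
  fixes x :: "'a::field mat3"
  assumes x: "x \<in> H3" and two: "(2::'a::field) \<noteq> 0"
  shows "herm (coords_of x) = x"
proof -
  have sym: "x i j = oconj (x j i)" for i j
    using x unfolding H3_def by blast
  have diag: "oscalar (re (x i i)) = x i i" for i
  proof -
    obtain a0 a1 a2 a3 a4 a5 a6 a7 where a: "x i i = ((a0, a1, a2, a3), (a4, a5, a6, a7))"
      by (metis prod.exhaust)
    show ?thesis
      using sym[of i i] by (simp add: a oscalar_def re_def self_eq_neg_iff[OF two])
  qed
  show ?thesis
    by (rule mat3_eqI)
      (simp_all add: coords_of_def distinct_3 diag sym[of 0 2] sym[of 1 0] sym[of 2 1])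
qed

lemma herm_add: "herm (p + q) = herm p + herm q"
  by (induct p rule: coords_induct; induct q rule: coords_induct; rule mat3_eqI)
    (simp_all add: oscalar_def distinct_3)

lemma herm_diff: "herm (p - q) = herm p - herm q"
  using herm_add[of "p - q" q] by (simp add: eq_diff_eq)

lemma herm_zero: "herm 0 = (0 :: 'a::field mat3)"
  using herm_diff[of 0 0] by simp

lemma herm_scale: "herm (cscale c p) = mscale c (herm p)"
  by (induct p rule: coords_induct; rule mat3_eqI) (simp_all add: mscale_def oscalar_def distinct_3)

lemma herm_sum: "(\<Sum>k<(m::nat). herm (f k)) = herm (\<Sum>k<m. f k)"
  by (induct m) (simp_all add: herm_zero herm_add)

context
  fixes lam mu nu :: "'a::field"
begin

abbreviation omult :: "'a oct \<Rightarrow> 'a oct \<Rightarrow> 'a oct" (infixl \<open>\<cdot>\<close> 70) where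
  "a \<cdot> b \<equiv> omul lam mu nu a b"

definition oform :: "'a oct \<Rightarrow> 'a oct \<Rightarrow> 'a" where
  "oform a b = re (a \<cdot> oconj b)"

(* The coordinates of xy + yx, i.e. twice the Jordan product. *)
fun jmul :: "'a coords \<Rightarrow> 'a coords \<Rightarrow> 'a coords" where
  "jmul (d0, d1, d2, c0, c1, c2) (e0, e1, e2, f0, f1, f2) =
    (2 * (d0 * e0 + oform c1 f1 + oform c2 f2),
     2 * (d1 * e1 + oform c2 f2 + oform c0 f0),
     2 * (d2 * e2 + oform c0 f0 + oform c1 f1),
     oscale (d1 + d2) f0 + oscale (e1 + e2) c0 + oconj (c1 \<cdot> f2 + f1 \<cdot> c2),
     oscale (d2 + d0) f1 + oscale (e2 + e0) c1 + oconj (c2 \<cdot> f0 + f2 \<cdot> c0),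
     oscale (d0 + d1) f2 + oscale (e0 + e1) c2 + oconj (c0 \<cdot> f1 + f0 \<cdot> c1))"

definition trace_form :: "'a coords \<Rightarrow> 'a coords \<Rightarrow> 'a" where
  "trace_form p q = trace (jmul p q)"

fun adj :: "'a coords \<Rightarrow> 'a coords" where
  "adj (d0, d1, d2, c0, c1, c2) =
    (d1 * d2 - oform c0 c0, d2 * d0 - oform c1 c1, d0 * d1 - oform c2 c2,
     oconj (c1 \<cdot> c2) - oscale d0 c0, oconj (c2 \<cdot> c0) - oscale d1 c1, oconj (c0 \<cdot> c1) - oscale d2 c2)"

definition adj_cross :: "'a coords \<Rightarrow> 'a coords \<Rightarrow> 'a coords" where
  "adj_cross p q = adj (p + q) - adj p - adj q"

lemmas coords_simps = jmul.simps adj.simps trace.simps cscale.simps cunit_def trace_form_def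
  adj_cross_def oform_def re_def oscale.simps qscale.simps omul.simps qmul.simps qconj.simps
  oconj.simps add_Pair diff_Pair uminus_Pair fst_conv snd_conv prod.inject zero_prod_def simp_thms
  mult_zero_left mult_zero_right add_0_left add_0_right diff_zero diff_0 minus_zero minus_minus
  mult_1_left mult_1_right

lemma jmul_commute: "jmul p q = jmul q p"
  by (induct p rule: coords_induct; induct q rule: coords_induct;
      simp only: coords_simps; (intro conjI)?; algebra)

lemma jmul_add_left: "jmul (p + q) r = jmul p r + jmul q r"
  by (induct p rule: coords_induct; induct q rule: coords_induct; induct r rule: coords_induct;
      simp only: coords_simps; (intro conjI)?; algebra)

lemma jmul_add_right: "jmul p (q + r) = jmul p q + jmul p r"
  using jmul_add_left[of q r p] by (simp only: jmul_commute)

lemma jmul_scale_left: "jmul (cscale c p) q = cscale c (jmul p q)"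
  by (induct p rule: coords_induct; induct q rule: coords_induct;
      simp only: coords_simps; (intro conjI)?; algebra)

lemma trace_add: "trace (p + q) = trace p + trace q"
  by (induct p rule: coords_induct; induct q rule: coords_induct; simp)

lemma trace_scale: "trace (cscale c p) = c * trace p"
  by (induct p rule: coords_induct; simp add: algebra_simps)

lemma trace_form_jmul_assoc:
  "trace_form (jmul p q) r = trace_form p (jmul q r)"
  by (induct p rule: coords_induct; induct q rule: coords_induct; induct r rule: coords_induct;
      simp only: coords_simps; (intro conjI)?; algebra)

lemma jmul_scale_right: "jmul p (cscale c q) = cscale c (jmul p q)"
  using jmul_scale_left[where p = q and q = p] by (simp only: jmul_commute)

lemma jmul_diff_right: "jmul p (q - r) = jmul p q - jmul p r"
  using jmul_add_right[where q = "q - r" and r = r] by (simp add: eq_diff_eq)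

lemma jmul_zero_right: "jmul p 0 = 0"
  using jmul_diff_right[of p 0 0] by simp

lemma trace_form_commute: "trace_form p q = trace_form q p"
  by (simp add: trace_form_def jmul_commute)

lemma trace_form_add_left: "trace_form (p + q) r = trace_form p r + trace_form q r"
  by (simp add: trace_form_def jmul_add_left trace_add)

lemma trace_form_add_right: "trace_form r (p + q) = trace_form r p + trace_form r q"
  using trace_form_add_left[of p q r] by (simp only: trace_form_commute)

lemma trace_form_diff_left: "trace_form (p - q) r = trace_form p r - trace_form q r"
  using trace_form_add_left[of "p - q" q r] by (simp add: eq_diff_eq)

lemma trace_form_diff_right: "trace_form r (p - q) = trace_form r p - trace_form r q"
  using trace_form_diff_left[of p q r] by (simp only: trace_form_commute)

lemma trace_form_scale_left: "trace_form (cscale c p) q = c * trace_form p q"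
  by (simp add: trace_form_def jmul_scale_left trace_scale)

lemma trace_form_scale_right: "trace_form p (cscale c q) = c * trace_form p q"
  using trace_form_scale_left[of c q p] by (simp only: trace_form_commute)

lemma trace_form_zero_right: "trace_form p 0 = 0"
  using trace_form_diff_right[of p 0 0] by simp

lemma trace_form_zero_left: "trace_form 0 p = 0"
  by (simp add: trace_form_commute[of 0 p] trace_form_zero_right)

lemma adj_add: "adj (p + q) = adj p + adj_cross p q + adj q"
  by (simp add: adj_cross_def)

lemma adj_diff: "adj (p - q) = adj p - adj_cross p q + adj q"
  by (induct p rule: coords_induct; induct q rule: coords_induct;
      simp only: coords_simps; (intro conjI)?; algebra)

lemma trace_form_adj_cross_swap: "trace_form (adj_cross x y) z = trace_form (adj_cross x z) y"
  by (induct x rule: coords_induct; induct y rule: coords_induct; induct z rule: coords_induct;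
      simp only: coords_simps; (intro conjI)?; algebra)

lemma adj_cross_unit: "adj_cross x cunit = cscale (trace x) cunit - x"
  by (induct x rule: coords_induct; simp only: coords_simps; (intro conjI)?; algebra)

lemma jmul_self:
  "jmul x x = cscale 2 (adj x) + cscale (2 * trace x) x - cscale (2 * trace (adj x)) cunit"
  by (induct x rule: coords_induct; simp only: coords_simps; (intro conjI)?; algebra)

lemma jmul_eq_adj_cross:
  "jmul x y = adj_cross x y + cscale (trace x) y + cscale (trace y) x
     - cscale (trace (adj_cross x y)) cunit"
  by (induct x rule: coords_induct; induct y rule: coords_induct;
      simp only: coords_simps; (intro conjI)?; algebra)

lemma jmul_unit: "jmul p cunit = p + p"
  by (induct p rule: coords_induct; simp only: coords_simps; (intro conjI)?; algebra)

lemma trace_form_unit: "trace_form p cunit = 2 * trace p"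
  by (induct p rule: coords_induct; simp only: coords_simps; (intro conjI)?; algebra)

(* With jmul_self, this is the Jordan identity: L(x\<^sup>2) commutes with L(x). *)
lemma jmul_adj_commute: "jmul (adj x) (jmul x b) = jmul x (jmul (adj x) b)"
proof -
  have diag: "jmul (adj x) (jmul x (e0, e1, e2, 0, 0, 0)) = jmul x (jmul (adj x) (e0, e1, e2, 0, 0, 0))"
    for e0 e1 e2
    by (induct x rule: coords_induct; simp only: coords_simps; (intro conjI)?; algebra)
  have off0: "jmul (adj x) (jmul x (0, 0, 0, c, 0, 0)) = jmul x (jmul (adj x) (0, 0, 0, c, 0, 0))" for c
    by (induct x rule: coords_induct; induct c rule: oct_induct;
        simp only: coords_simps; (intro conjI)?; algebra)
  have off1: "jmul (adj x) (jmul x (0, 0, 0, 0, c, 0)) = jmul x (jmul (adj x) (0, 0, 0, 0, c, 0))" for c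
    by (induct x rule: coords_induct; induct c rule: oct_induct;
        simp only: coords_simps; (intro conjI)?; algebra)
  have off2: "jmul (adj x) (jmul x (0, 0, 0, 0, 0, c)) = jmul x (jmul (adj x) (0, 0, 0, 0, 0, c))" for c
    by (induct x rule: coords_induct; induct c rule: oct_induct;
        simp only: coords_simps; (intro conjI)?; algebra)
  obtain e0 e1 e2 c0 c1 c2 where
    "b = (e0, e1, e2, 0, 0, 0) + (0, 0, 0, c0, 0, 0) + (0, 0, 0, 0, c1, 0) + (0, 0, 0, 0, 0, c2)"
    by (cases b) simp
  then show ?thesis
    by (simp only: jmul_add_right diag off0 off1 off2)
qed

lemma trace_form_eq:
  "trace_form (d0, d1, d2, c0, c1, c2) (e0, e1, e2, f0, f1, f2) =
     2 * (d0 * e0 + d1 * e1 + d2 * e2) + 4 * (oform c0 f0 + oform c1 f1 + oform c2 f2)"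
  by (simp add: trace_form_def algebra_simps)

lemma oform_zero_right: "oform a 0 = 0"
  by (induct a rule: oct_induct) (simp add: coords_simps)

lemma oform_eq:
  "oform ((a0, a1, a2, a3), (a4, a5, a6, a7)) ((b0, b1, b2, b3), (b4, b5, b6, b7)) =
     a0 * b0 - lam * a1 * b1 - mu * a2 * b2 + lam * mu * a3 * b3
     - nu * a4 * b4 + lam * nu * a5 * b5 + mu * nu * a6 * b6 - lam * mu * nu * a7 * b7"
  by (simp only: coords_simps; algebra)

lemma oform_nondegenerate:
  assumes "lam \<noteq> 0" "mu \<noteq> 0" "nu \<noteq> 0" and orth: "\<And>b. oform a b = 0"
  shows "a = 0"
proof -
  obtain a0 a1 a2 a3 a4 a5 a6 a7 where a: "a = ((a0, a1, a2, a3), (a4, a5, a6, a7))"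
    by (metis prod.exhaust)
  show ?thesis
    using orth[of "((1, 0, 0, 0), (0, 0, 0, 0))"] orth[of "((0, 1, 0, 0), (0, 0, 0, 0))"]
      orth[of "((0, 0, 1, 0), (0, 0, 0, 0))"] orth[of "((0, 0, 0, 1), (0, 0, 0, 0))"]
      orth[of "((0, 0, 0, 0), (1, 0, 0, 0))"] orth[of "((0, 0, 0, 0), (0, 1, 0, 0))"]
      orth[of "((0, 0, 0, 0), (0, 0, 1, 0))"] orth[of "((0, 0, 0, 0), (0, 0, 0, 1))"]
    by (simp add: a oform_eq assms(1-3) zero_prod_def)
qed

lemma trace_form_nondegenerate:
  assumes nz: "lam \<noteq> 0" "mu \<noteq> 0" "nu \<noteq> 0" "(2::'a) \<noteq> 0"
    and orth: "\<And>z. trace_form w z = 0"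
  shows "w = 0"
proof -
  obtain d0 d1 d2 c0 c1 c2 where w: "w = (d0, d1, d2, c0, c1, c2)"
    by (cases w) blast
  have "(4::'a) \<noteq> 0"
    using nz(4) by (metis mult_2_right mult_eq_0_iff numeral_Bit0)
  then have "oform c0 f = 0" "oform c1 f = 0" "oform c2 f = 0" for f
    using orth[of "(0, 0, 0, f, 0, 0)"] orth[of "(0, 0, 0, 0, f, 0)"] orth[of "(0, 0, 0, 0, 0, f)"]
    by (simp_all add: w trace_form_eq oform_zero_right)
  then have "c0 = 0" "c1 = 0" "c2 = 0"
    using oform_nondegenerate[OF nz(1-3)] by blast+
  moreover have "d0 = 0" "d1 = 0" "d2 = 0"
    using orth[of "(1, 0, 0, 0, 0, 0)"] orth[of "(0, 1, 0, 0, 0, 0)"] orth[of "(0, 0, 1, 0, 0, 0)"] nz(4)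
    by (simp_all add: w trace_form_eq oform_zero_right)
  ultimately show ?thesis
    by (simp add: w zero_prod_def)
qed

definition inner_der :: "'a coords \<Rightarrow> 'a coords \<Rightarrow> 'a coords \<Rightarrow> 'a coords" where
  "inner_der a b p = jmul a (jmul b p) - jmul b (jmul a p)"

lemma inner_der_add: "inner_der a b (p + q) = inner_der a b p + inner_der a b q"
  by (simp add: inner_der_def jmul_add_right add_diff_add)

lemma inner_der_diff: "inner_der a b (p - q) = inner_der a b p - inner_der a b q"
  using inner_der_add[of a b "p - q" q] by (simp add: eq_diff_eq)

lemma inner_der_scale: "inner_der a b (cscale c p) = cscale c (inner_der a b p)"
  by (simp add: inner_der_def jmul_scale_right coords.scale_right_diff_distrib)

lemma inner_der_unit: "inner_der a b cunit = 0"
  by (simp add: inner_der_def jmul_unit jmul_add_right jmul_commute[where p = a and q = b])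

lemma trace_form_inner_der_skew: "trace_form (inner_der a b p) q = - trace_form p (inner_der a b q)"
proof -
  have move: "trace_form (jmul a (jmul b p)) q = trace_form p (jmul b (jmul a q))" for a b
  proof -
    have "trace_form (jmul a (jmul b p)) q = trace_form (jmul (jmul b p) a) q"
      by (simp only: jmul_commute)
    also have "\<dots> = trace_form (jmul b p) (jmul a q)"
      by (rule trace_form_jmul_assoc)
    also have "\<dots> = trace_form (jmul p b) (jmul a q)"
      by (simp only: jmul_commute)
    also have "\<dots> = trace_form p (jmul b (jmul a q))"
      by (rule trace_form_jmul_assoc)
    finally show ?thesis .
  qed
  show ?thesis
    by (simp add: inner_der_def trace_form_diff_left trace_form_diff_right move)
qed

lemma trace_form_inner_der_self:
  assumes "(2::'a) \<noteq> 0"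
  shows "trace_form p (inner_der a b p) = 0"
proof -
  have "trace_form p (inner_der a b p) = - trace_form p (inner_der a b p)"
    using trace_form_inner_der_skew[of a b p p] by (simp only: trace_form_commute)
  then show ?thesis
    using assms by (simp add: self_eq_neg_iff)
qed

lemma trace_inner_der:
  assumes "(2::'a) \<noteq> 0"
  shows "trace (inner_der a b p) = 0"
proof -
  have "2 * trace (inner_der a b p) = trace_form (inner_der a b p) cunit"
    by (simp add: trace_form_unit)
  also have "\<dots> = 0"
    by (simp add: trace_form_inner_der_skew inner_der_unit trace_form_zero_right)
  finally show ?thesis
    using assms by simp
qed

lemma trace_form_adj_inner_der_self: "trace_form (adj x) (inner_der a b x) = 0"
proof -
  have "trace_form (adj x) (jmul a (jmul b x)) = trace_form (jmul a (jmul b x)) (adj x)"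
    by (rule trace_form_commute)
  also have "\<dots> = trace_form a (jmul (jmul b x) (adj x))"
    by (rule trace_form_jmul_assoc)
  also have "\<dots> = trace_form a (jmul (adj x) (jmul x b))"
    by (simp only: jmul_commute)
  finally have ab: "trace_form (adj x) (jmul a (jmul b x)) = trace_form a (jmul (adj x) (jmul x b))" .
  have "trace_form (adj x) (jmul b (jmul a x)) = trace_form (jmul (adj x) b) (jmul a x)"
    by (rule trace_form_jmul_assoc[symmetric])
  also have "\<dots> = trace_form (jmul a x) (jmul (adj x) b)"
    by (rule trace_form_commute)
  also have "\<dots> = trace_form a (jmul x (jmul (adj x) b))"
    by (rule trace_form_jmul_assoc)
  finally have ba: "trace_form (adj x) (jmul b (jmul a x)) = trace_form a (jmul x (jmul (adj x) b))" .
  from ab ba show ?thesis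
    by (simp add: inner_der_def trace_form_diff_right jmul_adj_commute)
qed

lemma trace_form_adj_inner_der_polar:
  assumes "(2::'a) \<noteq> 0"
  shows "trace_form (adj x) (inner_der a b y) + trace_form (adj_cross x y) (inner_der a b x) = 0"
proof -
  note plus = trace_form_adj_inner_der_self[of "x + y" a b,
      unfolded adj_add inner_der_add trace_form_add_left trace_form_add_right]
  note minus = trace_form_adj_inner_der_self[of "x - y" a b,
      unfolded adj_diff inner_der_diff trace_form_add_left trace_form_add_right
        trace_form_diff_left trace_form_diff_right]
  have "2 * (trace_form (adj x) (inner_der a b y) + trace_form (adj_cross x y) (inner_der a b x)) = 0"
    using plus minus trace_form_adj_inner_der_self[of x a b] trace_form_adj_inner_der_self[of y a b]
    by algebra
  then show ?thesis
    using assms by (metis mult_eq_0_iff)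
qed

lemma inner_der_adj:
  assumes nz: "lam \<noteq> 0" "mu \<noteq> 0" "nu \<noteq> 0" "(2::'a) \<noteq> 0"
  shows "inner_der a b (adj x) = adj_cross x (inner_der a b x)"
proof -
  have "inner_der a b (adj x) - adj_cross x (inner_der a b x) = 0"
  proof (rule trace_form_nondegenerate[OF nz])
    fix z
    have "trace_form (inner_der a b (adj x)) z = trace_form (adj_cross x z) (inner_der a b x)"
      using trace_form_inner_der_skew[of a b "adj x" z]
        add.inverse_unique[OF trace_form_adj_inner_der_polar[OF nz(4), of x a b z]]
      by simp
    also have "\<dots> = trace_form (adj_cross x (inner_der a b x)) z"
      by (rule trace_form_adj_cross_swap)
    finally show "trace_form (inner_der a b (adj x) - adj_cross x (inner_der a b x)) z = 0"
      by (simp add: trace_form_diff_left)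
  qed
  then show ?thesis
    by simp
qed

lemma trace_adj_cross_inner_der:
  assumes "(2::'a) \<noteq> 0"
  shows "trace (adj_cross x (inner_der a b x)) = 0"
proof -
  have "2 * trace (adj_cross x (inner_der a b x)) = trace_form (adj_cross x (inner_der a b x)) cunit"
    by (simp add: trace_form_unit)
  also have "\<dots> = trace_form (adj_cross x cunit) (inner_der a b x)"
    by (rule trace_form_adj_cross_swap)
  also have "\<dots> = trace x * trace_form (inner_der a b x) cunit - trace_form x (inner_der a b x)"
    by (simp add: adj_cross_unit trace_form_diff_left trace_form_scale_left trace_form_commute)
  also have "\<dots> = 0"
    using assms by (simp add: trace_form_unit trace_inner_der trace_form_inner_der_self)
  finally show ?thesis
    using assms by simp
qed

lemma inner_der_jmul_self:
  assumes nz: "lam \<noteq> 0" "mu \<noteq> 0" "nu \<noteq> 0" "(2::'a) \<noteq> 0"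
  shows "inner_der a b (jmul x x) = jmul x (inner_der a b x) + jmul x (inner_der a b x)"
proof -
  have "inner_der a b (jmul x x) = cscale 2 (inner_der a b (adj x))
      + cscale (2 * trace x) (inner_der a b x) - cscale (2 * trace (adj x)) (inner_der a b cunit)"
    by (simp only: jmul_self inner_der_add inner_der_diff inner_der_scale)
  then have lhs: "inner_der a b (jmul x x) =
      cscale 2 (adj_cross x (inner_der a b x)) + cscale (2 * trace x) (inner_der a b x)"
    by (simp only: inner_der_adj[OF nz] inner_der_unit coords.scale_zero_right diff_zero)
  have rhs: "jmul x (inner_der a b x) = adj_cross x (inner_der a b x) + cscale (trace x) (inner_der a b x)"
    using nz(4) by (simp add: jmul_eq_adj_cross trace_inner_der trace_adj_cross_inner_der)
  have "cscale (2 * trace x) (inner_der a b x) =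
      cscale (trace x) (inner_der a b x) + cscale (trace x) (inner_der a b x)"
    by (simp only: mult_2 coords.scale_left_distrib)
  then show ?thesis
    by (simp only: lhs rhs cscale_two add_ac)
qed

definition skew_der :: "('a coords \<Rightarrow> 'a coords) \<Rightarrow> bool" where
  "skew_der G \<longleftrightarrow> (\<forall>p q. trace_form (G p) q = - trace_form p (G q)) \<and>
     (\<forall>p. G (jmul p p) = jmul p (G p) + jmul p (G p))"

lemma skew_der_inner_der:
  assumes "lam \<noteq> 0" "mu \<noteq> 0" "nu \<noteq> 0" "(2::'a) \<noteq> 0"
  shows "skew_der (inner_der a b)"
  unfolding skew_der_def using trace_form_inner_der_skew inner_der_jmul_self[OF assms] by blast

lemma skew_der_zero: "skew_der (\<lambda>p. 0)"
  unfolding skew_der_def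
  by (simp add: trace_form_zero_left trace_form_zero_right jmul_zero_right del: split_paired_All)

lemma skew_der_add:
  assumes "skew_der F" "skew_der G"
  shows "skew_der (\<lambda>p. F p + G p)"
  using assms unfolding skew_der_def
  by (simp add: trace_form_add_left trace_form_add_right jmul_add_right add_ac del: split_paired_All)

lemma skew_der_scale:
  assumes "skew_der G"
  shows "skew_der (\<lambda>p. cscale c (G p))"
  using assms unfolding skew_der_def
  by (simp add: trace_form_scale_left trace_form_scale_right jmul_scale_right
      coords.scale_right_distrib del: split_paired_All)

lemma skew_der_sum:
  assumes "\<And>k. skew_der (F k)"
  shows "skew_der (\<lambda>p. \<Sum>k<(m::nat). F k p)"
proof (induction m)
  case 0
  show ?case
    using skew_der_zero by simp
next
  case (Suc m)
  then show ?case
    using skew_der_add[OF Suc assms[of m]] by simp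
qed

lemma skew_der_if_2local:
  assumes local: "\<And>p q. \<exists>G. skew_der G \<and> F p = G p \<and> F q = G q"
  shows "skew_der F"
proof -
  have skew: "trace_form (F p) q = - trace_form p (F q)" for p q
  proof -
    obtain G where G: "skew_der G" "F p = G p" "F q = G q"
      using local by blast
    then show ?thesis
      unfolding skew_der_def by (simp del: split_paired_All)
  qed
  have sq: "F (jmul p p) = jmul p (F p) + jmul p (F p)" for p
  proof -
    obtain G where G: "skew_der G" "F p = G p" "F (jmul p p) = G (jmul p p)"
      using local by blast
    then show ?thesis
      unfolding skew_der_def by (simp del: split_paired_All)
  qed
  show ?thesis
    unfolding skew_der_def using skew sq by blast
qed

context
  fixes G :: "'a coords \<Rightarrow> 'a coords"
  assumes nz: "lam \<noteq> 0" "mu \<noteq> 0" "nu \<noteq> 0" "(2::'a) \<noteq> 0"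
    and skew_der_G: "skew_der G"
begin

lemma skew_der_skew: "trace_form (G p) q = - trace_form p (G q)"
  using skew_der_G unfolding skew_der_def by blast

lemma skew_der_additive: "G (p + q) = G p + G q"
proof -
  have "G (p + q) - G p - G q = 0"
    by (rule trace_form_nondegenerate[OF nz])
      (simp add: trace_form_diff_left skew_der_skew trace_form_add_left)
  then show ?thesis
    by (simp only: diff_diff_eq right_minus_eq)
qed

lemma skew_der_homogeneous: "G (cscale c p) = cscale c (G p)"
proof -
  have "G (cscale c p) - cscale c (G p) = 0"
    by (rule trace_form_nondegenerate[OF nz])
      (simp add: trace_form_diff_left skew_der_skew trace_form_scale_left)
  then show ?thesis
    by simp
qed

lemma skew_der_leibniz: "G (jmul p q) = jmul (G p) q + jmul p (G q)"
proof -
  have sq: "G (jmul r r) = jmul r (G r) + jmul r (G r)" for r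
    using skew_der_G unfolding skew_der_def by blast
  have "G (jmul (p + q) (p + q)) =
      G (jmul p p) + (G (jmul p q) + G (jmul p q)) + G (jmul q q)"
    by (simp add: jmul_add_left jmul_add_right jmul_commute[where p = q and q = p]
        skew_der_additive add_ac)
  moreover have "jmul (p + q) (G (p + q)) =
      jmul p (G p) + (jmul p (G q) + jmul (G p) q) + jmul q (G q)"
    by (simp add: jmul_add_left jmul_add_right jmul_commute[where p = q and q = "G p"]
        skew_der_additive add_ac)
  ultimately have "G (jmul p q) + G (jmul p q) =
      (jmul (G p) q + jmul p (G q)) + (jmul (G p) q + jmul p (G q))"
    using sq[of "p + q"] sq[of p] sq[of q] by (simp add: algebra_simps)
  then have "cscale 2 (G (jmul p q)) = cscale 2 (jmul (G p) q + jmul p (G q))"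
    by (simp only: cscale_two)
  then show ?thesis
    using nz(4) by simp
qed

end

lemmas herm_simps = herm.simps oscalar_def distinct_3 if_True if_False mmul_def sum_UNIV_3
  plus_fun_apply

lemma mmul_herm:
  "mmul lam mu nu (herm p) (herm q) + mmul lam mu nu (herm q) (herm p) = herm (jmul p q)"
  by (induct p rule: coords_induct; induct q rule: coords_induct; rule mat3_eqI;
      simp only: herm_simps coords_simps; (intro conjI)?; algebra)

lemma jprod_herm: "jprod lam mu nu (herm p) (herm q) = herm (cscale (1/2) (jmul p q))"
  by (simp add: jprod_def mmul_herm herm_scale)

lemma jprod_jprod_herm:
  "jprod lam mu nu (herm a) (jprod lam mu nu (herm b) (herm p)) = herm (cscale (1/4) (jmul a (jmul b p)))"
  by (simp add: jprod_herm jmul_scale_right)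

lemma inner_derivation_coords:
  assumes D: "is_inner_derivation lam mu nu D"
    and nz: "lam \<noteq> 0" "mu \<noteq> 0" "nu \<noteq> 0" "(2::'a) \<noteq> 0"
  obtains G where "skew_der G" "\<And>p. D (herm p) = herm (G p)"
proof -
  obtain m :: nat and a b where ab: "\<forall>k<m. a k \<in> H3 \<and> b k \<in> H3"
    and Dx: "\<forall>x\<in>H3. D x = (\<Sum>k<m. jprod lam mu nu (a k) (jprod lam mu nu (b k) x)
                               - jprod lam mu nu (b k) (jprod lam mu nu (a k) x))"
    using D unfolding is_inner_derivation_def by blast
  define G where
    "G p = (\<Sum>k<m. cscale (1/4) (inner_der (coords_of (a k)) (coords_of (b k)) p))" for p
  have "skew_der G"
    unfolding G_def by (intro skew_der_sum skew_der_scale skew_der_inner_der nz)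
  moreover have "D (herm p) = herm (G p)" for p
  proof -
    have summand: "jprod lam mu nu (a k) (jprod lam mu nu (b k) (herm p))
        - jprod lam mu nu (b k) (jprod lam mu nu (a k) (herm p))
        = herm (cscale (1/4) (inner_der (coords_of (a k)) (coords_of (b k)) p))"
      if "k < m" for k
    proof -
      have "herm (coords_of (a k)) = a k" "herm (coords_of (b k)) = b k"
        using ab that herm_coords_of[OF _ nz(4)] by auto
      then obtain A B where "a k = herm A" "b k = herm B"
        by metis
      then show ?thesis
        by (simp add: jprod_jprod_herm herm_diff[symmetric] inner_der_def coords_of_herm
            coords.scale_right_diff_distrib)
    qed
    have "D (herm p) = (\<Sum>k<m. jprod lam mu nu (a k) (jprod lam mu nu (b k) (herm p))
        - jprod lam mu nu (b k) (jprod lam mu nu (a k) (herm p)))"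
      using Dx herm_in_H3 by blast
    also have "\<dots> = (\<Sum>k<m. herm (cscale (1/4) (inner_der (coords_of (a k)) (coords_of (b k)) p)))"
      by (rule sum.cong) (simp_all add: summand)
    also have "\<dots> = herm (G p)"
      by (simp add: herm_sum G_def)
    finally show ?thesis .
  qed
  ultimately show thesis
    by (rule that)
qed

lemma is_derivation_if_coords:
  assumes nz: "lam \<noteq> 0" "mu \<noteq> 0" "nu \<noteq> 0" "(2::'a) \<noteq> 0"
    and F: "skew_der F" and \<Delta>: "\<And>p. \<Delta> (herm p) = herm (F p)"
  shows "is_derivation lam mu nu \<Delta>"
  unfolding is_derivation_def
proof (intro conjI ballI allI)
  fix x y :: "'a mat3"
  assume x: "x \<in> H3" and y: "y \<in> H3"
  obtain p q where xp: "x = herm p" and yq: "y = herm q"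
    using herm_coords_of[OF x nz(4)] herm_coords_of[OF y nz(4)] by metis
  show "\<Delta> x \<in> H3"
    by (simp add: xp \<Delta> herm_in_H3)
  show "\<Delta> (x + y) = \<Delta> x + \<Delta> y"
    by (simp add: xp yq \<Delta> herm_add[symmetric] skew_der_additive[OF nz F])
  show "\<Delta> (jprod lam mu nu x y) = jprod lam mu nu (\<Delta> x) y + jprod lam mu nu x (\<Delta> y)"
    by (simp add: xp yq \<Delta> jprod_herm herm_add[symmetric] skew_der_homogeneous[OF nz F]
        skew_der_leibniz[OF nz F] coords.scale_right_distrib)
next
  fix c and x :: "'a mat3"
  assume x: "x \<in> H3"
  obtain p where xp: "x = herm p"
    using herm_coords_of[OF x nz(4)] by metis
  show "\<Delta> (mscale c x) = mscale c (\<Delta> x)"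
    by (simp add: xp \<Delta> herm_scale[symmetric] skew_der_homogeneous[OF nz F])
qed

lemma two_local_inner_derivation_coords:
  assumes nz: "lam \<noteq> 0" "mu \<noteq> 0" "nu \<noteq> 0" "(2::'a) \<noteq> 0"
    and \<Delta>: "is_2local_inner_derivation lam mu nu \<Delta>"
  shows "skew_der (\<lambda>p. coords_of (\<Delta> (herm p)))"
    and "\<And>p. \<Delta> (herm p) = herm (coords_of (\<Delta> (herm p)))"
proof -
  have local: "\<exists>G. skew_der G \<and> \<Delta> (herm p) = herm (G p) \<and> \<Delta> (herm q) = herm (G q)" for p q
  proof -
    obtain D where D: "is_inner_derivation lam mu nu D"
      "\<Delta> (herm p) = D (herm p)" "\<Delta> (herm q) = D (herm q)"
      using \<Delta> herm_in_H3 unfolding is_2local_inner_derivation_def by blast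
    obtain G where "skew_der G" "\<And>p. D (herm p) = herm (G p)"
      using inner_derivation_coords[OF D(1) nz] by blast
    with D show ?thesis
      by metis
  qed
  show "skew_der (\<lambda>p. coords_of (\<Delta> (herm p)))"
  proof (rule skew_der_if_2local)
    fix p q
    show "\<exists>G. skew_der G \<and> coords_of (\<Delta> (herm p)) = G p \<and> coords_of (\<Delta> (herm q)) = G q"
      using local[of p q] by (metis coords_of_herm)
  qed
  show "\<Delta> (herm p) = herm (coords_of (\<Delta> (herm p)))" for p
    using local[of p p] by (metis coords_of_herm)
qed

end

theorem theorem3p5:
  fixes lam mu nu :: "'a::field" and \<Delta> :: "'a mat3 \<Rightarrow> 'a mat3"
  assumes "algebraically_closed TYPE('a)"
    and "(2::'a) \<noteq> 0"
    and "lam \<noteq> 0" and "mu \<noteq> 0" and "nu \<noteq> 0"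
    and "is_2local_inner_derivation lam mu nu \<Delta>"
  shows "is_derivation lam mu nu \<Delta>"
proof -
  note nz = assms(3-5,2)
  show ?thesis
    by (rule is_derivation_if_coords[OF nz two_local_inner_derivation_coords[OF nz assms(6)]])
qed

end
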